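(* Let $L>0$ be fixed and let the constant renormalized force be $F=cN^{\gamma}$ with $c>0$, $\gamma>1$. Then the normalized counting measures of the fixed points, $\mu_N=\frac1N\sum_{i=0}^{N}\delta_{x_i}$ (Dirac masses at the particle positions), converge as $N\to\infty$ in the sense of distributions (weakly) to the Dirac delta measure at $0$.
   Context: A configuration consists of $N+1$ point particles $-L\le x_N<\dots<x_1<x_0\le 0$ on $[-L,0]$ with potential energy $U=\sum_{i=1}^{N}\frac{\alpha_{int}}{x_{i-1}-x_i}-\sum_{i=0}^{N}\int_{-L}^{x_i}\alpha_{ext}F_0\,dx$, $\alpha_{int},\alpha_{ext}>0$, with constant $F_0>0$; the renormalized force is the constant $F=\frac{\alpha_{ext}}{\alpha_{int}}F_0$, which may depend on $N$ (the external force pushes particles towards $0$). Write $\delta_k=x_{k-1}-x_k$, $f_k=\delta_k^{-2}$. The walls at $0,-L$ are completely inelastic. A fixed point is a configuration with $x_0=0$, $f_{k+1}+F=f_k$ for $k=1,\dots,N-1$, and either $x_N=-L$ with $f_N\ge F$, or $x_N>-L$ with $f_N=F$; it exists and is unique. *)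

theory Defs
  imports "HOL-Analysis.Analysis"
begin

text \<open>A configuration of N+1 particles is a function x :: nat => real, of which
  only the values x 0, ..., x N are used.  Gap delta_k = x_(k-1) - x_k and
  f_k = delta_k^(-2).\<close>

definition gap_f :: "(nat \<Rightarrow> real) \<Rightarrow> nat \<Rightarrow> real" where
  "gap_f x k = 1 / (x (k - 1) - x k)\<^sup>2"

definition fixed_point :: "nat \<Rightarrow> real \<Rightarrow> real \<Rightarrow> (nat \<Rightarrow> real) \<Rightarrow> bool" where
  "fixed_point N L F x \<longleftrightarrow>
     (-L \<le> x N) \<and> (\<forall>i<N. x (Suc i) < x i) \<and> x 0 \<le> 0 \<and>
     x 0 = 0 \<and>
     (\<forall>k. 1 \<le> k \<and> k \<le> N - 1 \<longrightarrow> gap_f x (k + 1) + F = gap_f x k) \<and>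
     ((x N = -L \<and> gap_f x N \<ge> F) \<or> (x N > -L \<and> gap_f x N = F))"

end

theory Submission
  imports Defs "HOL-Real_Asymp.Real_Asymp"
begin

text \<open>At a fixed point the recursion gives \<open>f\<^sub>k \<ge> (N - k + 1) F\<close>, so the \<open>k\<close>-th gap is at most
  \<open>1 / sqrt ((N - k + 1) F)\<close>, and the whole configuration lies in \<open>[-2 sqrt (N / F), 0]\<close>.
  For \<open>F = c N\<^sup>\<gamma>\<close> with \<open>\<gamma> > 1\<close> this width tends to \<open>0\<close>, so all particles collapse onto the
  wall at \<open>0\<close> uniformly, and the empirical averages of a continuous test function tend to
  its value at \<open>0\<close>.\<close>

lemma sum_inverse_sqrt_le: "(\<Sum>j<n. 1 / sqrt (real j + 1)) \<le> 2 * sqrt (real n)"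
proof (induction n)
  case 0
  then show ?case by simp
next
  case (Suc n)
  have "2 * sqrt (real n) * sqrt (real n + 1) \<le> 2 * real n + 1"
  proof -
    have "sqrt (real n) * sqrt (real n + 1) = sqrt (real n * (real n + 1))"
      by (simp add: real_sqrt_mult)
    also have "\<dots> \<le> sqrt ((real n + 1/2)\<^sup>2)"
      by (rule real_sqrt_le_mono) (simp add: power2_eq_square algebra_simps)
    finally show ?thesis by simp
  qed
  then have "1 / sqrt (real n + 1) \<le> 2 * sqrt (real n + 1) - 2 * sqrt (real n)"
    by (simp add: field_simps)
  then show ?case
    using Suc by (simp add: add.commute)
qed

lemma sum_inverse_sqrt_rev_le: "(\<Sum>k<n. 1 / sqrt (real (n - k))) \<le> 2 * sqrt (real n)"
proof -
  have "(\<Sum>k<n. 1 / sqrt (real (n - k))) = (\<Sum>k<n. 1 / sqrt (real (n - Suc k) + 1))"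
    by (rule sum.cong) (auto simp: Suc_diff_Suc of_nat_diff)
  also have "\<dots> = (\<Sum>j<n. 1 / sqrt (real j + 1))"
    by (rule sum.reindex_bij_witness[where i="\<lambda>k. n - Suc k" and j="\<lambda>k. n - Suc k"]) auto
  finally show ?thesis
    using sum_inverse_sqrt_le by simp
qed

lemma fixed_point_gap_f_eq:
  assumes "fixed_point N L F x" and "1 \<le> k" and "k \<le> N"
  shows "gap_f x k = gap_f x N + real (N - k) * F"
  using assms(3,2)
proof (induction k rule: inc_induct)
  case base
  then show ?case by simp
next
  case (step k)
  then have "gap_f x (k + 1) + F = gap_f x k"
    using assms(1) unfolding fixed_point_def by auto
  with step show ?case
    by (simp add: Suc_diff_Suc of_nat_diff algebra_simps)
qed

lemma fixed_point_gap_le: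
  assumes fp: "fixed_point N L F x" and "F > 0" and k: "k < N"
  shows "x k - x (Suc k) \<le> 1 / sqrt (real (N - k) * F)"
proof -
  define d where "d = x k - x (Suc k)"
  have "d > 0"
    using fp k by (simp add: fixed_point_def d_def)
  have "gap_f x N \<ge> F"
    using fp unfolding fixed_point_def by auto
  then have "real (N - k) * F \<le> gap_f x (Suc k)"
    using fixed_point_gap_f_eq[OF fp, of "Suc k"] k by (simp add: of_nat_diff algebra_simps)
  also have "\<dots> = 1 / d\<^sup>2"
    by (simp add: gap_f_def d_def)
  finally have "d\<^sup>2 \<le> 1 / (real (N - k) * F)"
    using \<open>d > 0\<close> \<open>F > 0\<close> k by (simp add: field_simps del: of_nat_diff)
  then have "sqrt (d\<^sup>2) \<le> sqrt (1 / (real (N - k) * F))"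
    by (rule real_sqrt_le_mono)
  then show ?thesis
    using \<open>d > 0\<close> by (simp add: d_def real_sqrt_divide)
qed

lemma fixed_point_abs_le:
  assumes fp: "fixed_point N L F x" and F: "F > 0" and i: "i \<le> N"
  shows "\<bar>x i\<bar> \<le> 2 * sqrt (real N / F)"
proof -
  have x0: "x 0 = 0" and dec: "\<And>k. k \<in> {..<N} \<Longrightarrow> x (Suc k) \<le> x k"
    using fp unfolding fixed_point_def by (auto intro: less_imp_le)
  have "x 0 - x N = (\<Sum>k<N. x k - x (Suc k))"
    using sum_lessThan_telescope'[of x N] by simp
  also have "\<dots> \<le> (\<Sum>k<N. 1 / sqrt (real (N - k)) / sqrt F)"
  proof (rule sum_mono)
    fix k
    assume "k \<in> {..<N}"
    then show "x k - x (Suc k) \<le> 1 / sqrt (real (N - k)) / sqrt F"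
      using fixed_point_gap_le[OF fp F, of k] by (simp add: real_sqrt_mult)
  qed
  also have "\<dots> = (\<Sum>k<N. 1 / sqrt (real (N - k))) / sqrt F"
    by (simp add: sum_divide_distrib)
  also have "\<dots> \<le> 2 * sqrt (real N) / sqrt F"
    using sum_inverse_sqrt_rev_le[of N] F by (simp add: divide_right_mono)
  finally have "- x N \<le> 2 * sqrt (real N / F)"
    using x0 by (simp add: real_sqrt_divide)
  moreover have "x N \<le> x i" and "x i \<le> x 0"
    using lift_Suc_antimono_le_ivl[of "{..<N}" x, OF dec] i by (auto simp: subset_eq)
  ultimately show ?thesis
    using x0 by simp
qed

lemma tendsto_mean_if_uniformly_close:
  fixes g :: "nat \<Rightarrow> nat \<Rightarrow> real"
  assumes close: "\<And>r. r > 0 \<Longrightarrow> eventually (\<lambda>N. \<forall>i\<le>N. \<bar>g N i - a\<bar> \<le> r) sequentially"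
  shows "(\<lambda>N. (\<Sum>i=0..N. g N i) / real (Suc N)) \<longlonglongrightarrow> a"
proof (rule LIMSEQ_I)
  fix r :: real
  assume "r > 0"
  then have "r / 2 > 0" by simp
  from close[OF this] obtain N0 where N0: "\<And>N i. N \<ge> N0 \<Longrightarrow> i \<le> N \<Longrightarrow> \<bar>g N i - a\<bar> \<le> r / 2"
    unfolding eventually_sequentially by blast
  have "\<bar>(\<Sum>i=0..N. g N i) / real (Suc N) - a\<bar> < r" if "N \<ge> N0" for N
  proof -
    have "(\<Sum>i=0..N. g N i) / real (Suc N) - a = (\<Sum>i=0..N. g N i - a) / real (Suc N)"
      by (simp add: sum_subtractf field_simps)
    also have "\<bar>\<dots>\<bar> \<le> (\<Sum>i=0..N. \<bar>g N i - a\<bar>) / real (Suc N)"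
      by (simp add: divide_right_mono sum_abs)
    also have "\<dots> \<le> (\<Sum>i=0..N. r / 2) / real (Suc N)"
      using N0[OF that] by (intro divide_right_mono sum_mono) auto
    also have "\<dots> = r / 2"
      by (simp del: of_nat_Suc)
    also have "\<dots> < r"
      using \<open>r > 0\<close> by simp
    finally show ?thesis .
  qed
  then show "\<exists>N0. \<forall>N\<ge>N0. norm ((\<Sum>i=0..N. g N i) / real (Suc N) - a) < r"
    by auto
qed

lemma tendsto_mean_isCont_if_uniformly_tendsto:
  fixes y :: "nat \<Rightarrow> nat \<Rightarrow> real" and e :: "nat \<Rightarrow> real"
  assumes "isCont \<phi> a" and "e \<longlonglongrightarrow> 0"
    and close: "eventually (\<lambda>N. \<forall>i\<le>N. \<bar>y N i - a\<bar> \<le> e N) sequentially"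
  shows "(\<lambda>N. (\<Sum>i=0..N. \<phi> (y N i)) / real (Suc N)) \<longlonglongrightarrow> \<phi> a"
proof (rule tendsto_mean_if_uniformly_close)
  fix r :: real
  assume "r > 0"
  then obtain d where "d > 0" and d: "\<And>z. \<bar>z - a\<bar> < d \<Longrightarrow> \<bar>\<phi> z - \<phi> a\<bar> < r"
    using \<open>isCont \<phi> a\<close> unfolding continuous_at_eps_delta dist_real_def by blast
  have "eventually (\<lambda>N. \<bar>e N\<bar> < d) sequentially"
    using \<open>e \<longlonglongrightarrow> 0\<close> \<open>d > 0\<close> by (auto simp: tendsto_iff dist_real_def)
  with close show "eventually (\<lambda>N. \<forall>i\<le>N. \<bar>\<phi> (y N i) - \<phi> a\<bar> \<le> r) sequentially"
  proof eventually_elim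
    case (elim N)
    show ?case
    proof (intro allI impI)
      fix i
      assume "i \<le> N"
      with elim have "\<bar>y N i - a\<bar> < d"
        by force
      then show "\<bar>\<phi> (y N i) - \<phi> a\<bar> \<le> r"
        by (simp add: d less_imp_le)
    qed
  qed
qed

theorem theorem2:
  fixes L c \<gamma> :: real and x :: "nat \<Rightarrow> nat \<Rightarrow> real"
  assumes "L > 0" and "c > 0" and "\<gamma> > 1"
    and "\<And>N. N \<ge> 1 \<Longrightarrow> fixed_point N L (c * real N powr \<gamma>) (x N)"
  shows "\<And>\<phi> :: real \<Rightarrow> real. continuous_on UNIV \<phi> \<Longrightarrow> bounded (range \<phi>) \<Longrightarrow>
           (\<lambda>N. (\<Sum>i=0..N. \<phi> (x N i)) / real N) \<longlonglongrightarrow> \<phi> 0"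
proof -
  fix \<phi> :: "real \<Rightarrow> real"
  assume "continuous_on UNIV \<phi>"
  then have "isCont \<phi> 0"
    by (simp add: continuous_on_eq_continuous_at)
  define e where "e N = 2 * sqrt (real N / (c * real N powr \<gamma>))" for N
  have "e \<longlonglongrightarrow> 0"
    unfolding e_def using assms(2,3) by real_asymp
  have "eventually (\<lambda>N. \<forall>i\<le>N. \<bar>x N i - 0\<bar> \<le> e N) sequentially"
    using eventually_ge_at_top[of 1]
  proof eventually_elim
    case (elim N)
    then show ?case
      using fixed_point_abs_le[OF assms(4)[OF elim]] assms(2) by (simp add: e_def)
  qed
  with \<open>isCont \<phi> 0\<close> \<open>e \<longlonglongrightarrow> 0\<close>
  have "(\<lambda>N. (\<Sum>i=0..N. \<phi> (x N i)) / real (Suc N)) \<longlonglongrightarrow> \<phi> 0"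
    by (rule tendsto_mean_isCont_if_uniformly_tendsto)
  from tendsto_mult[OF LIMSEQ_Suc_n_over_n this]
  show "(\<lambda>N. (\<Sum>i=0..N. \<phi> (x N i)) / real N) \<longlonglongrightarrow> \<phi> 0"
    by simp
qed

end
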